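(* Let $n$ be even. The signed cardinality statistic $SC$ is $0$-mesic under rowmotion on $\mathcal{IC}([n])$: its average over every rowmotion orbit equals $0$.
   Context: $[n]$ denotes the chain poset $1<2<\cdots<n$, ranked with $\mathrm{rk}(i)=i-1$. A subset $I\subseteq P$ of a finite poset is interval-closed if for all $x,y\in I$ and $z\in P$ with $x\le z\le y$ we have $z\in I$; $\mathcal{IC}(P)$ is the set of interval-closed subsets. For $x\in P$ the toggle $t_x$ sends $I$ to $I\triangle\{x\}$ if that is interval-closed and to $I$ otherwise. Rowmotion is $\mathrm{Row}=t_{x_1}\circ\cdots\circ t_{x_N}$, where $(x_1,\dots,x_N)$ is a linear extension of $P$ (toggling from the top down). For a ranked poset with minimum rank $0$, $SC(x)=1$ if $\mathrm{rk}(x)$ is even and $-1$ if odd, and $SC(I)=\sum_{x\in I}SC(x)$. A statistic is $c$-mesic if its average over every rowmotion orbit is $c$. *)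

theory Defs
  imports Complex_Main
begin

definition chain :: "nat \<Rightarrow> nat set" where
  "chain n = {1..n}"

definition interval_closed :: "nat set \<Rightarrow> nat set \<Rightarrow> bool" where
  "interval_closed P I \<longleftrightarrow> I \<subseteq> P \<and>
     (\<forall>x\<in>I. \<forall>y\<in>I. \<forall>z\<in>P. x \<le> z \<and> z \<le> y \<longrightarrow> z \<in> I)"

definition IC :: "nat \<Rightarrow> nat set set" where
  "IC n = {I. interval_closed (chain n) I}"

definition toggle :: "nat \<Rightarrow> nat \<Rightarrow> nat set \<Rightarrow> nat set" where
  "toggle n x I =
     (let J = (I - {x}) \<union> ({x} - I) in
      if interval_closed (chain n) J then J else I)"

text \<open>Rowmotion Row = t_1 \<circ> t_2 \<circ> ... \<circ> t_n, with (1,...,n) the (unique)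
  linear extension of [n]; so t_n is applied first (top down).\<close>
definition rowmotion :: "nat \<Rightarrow> nat set \<Rightarrow> nat set" where
  "rowmotion n = foldr (\<lambda>x f. toggle n x \<circ> f) [1..<n+1] id"

text \<open>Signed cardinality: SC(x) = 1 if rk(x) = x - 1 is even, -1 otherwise.\<close>
definition SC_elem :: "nat \<Rightarrow> int" where
  "SC_elem x = (if even (x - 1) then 1 else -1)"

definition SC :: "nat set \<Rightarrow> int" where
  "SC I = (\<Sum>x\<in>I. SC_elem x)"

definition orbit :: "('a \<Rightarrow> 'a) \<Rightarrow> 'a \<Rightarrow> 'a set" where
  "orbit f x = {(f ^^ k) x | k. True}"

definition mesic :: "('a \<Rightarrow> 'a) \<Rightarrow> 'a set \<Rightarrow> ('a \<Rightarrow> int) \<Rightarrow> real \<Rightarrow> bool" where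
  "mesic f S stat c \<longleftrightarrow>
     (\<forall>x\<in>S. (\<Sum>y\<in>orbit f x. real_of_int (stat y)) / real (card (orbit f x)) = c)"

end

theory Submission
  imports Defs
begin

text \<open>On the chain, the interval-closed sets are exactly the intervals {a..b}, and rowmotion
  acts on them explicitly: it sends {} to {1..n}, shifts {a..b} to {a+1..b+1} when b < n,
  and sends {a..n} to the complementary interval {1..a-1}. For even n the alternating signs
  on {1..n} sum to 0, so in each of the three cases SC changes sign. Since rowmotion is a
  bijection of the finite set IC(n), it permutes each orbit, whence the orbit sum of SC equals
  its own negative and vanishes.\<close>

lemma image_orbit_subset: "f ` orbit f x \<subseteq> orbit f x"
proof
  fix y assume "y \<in> f ` orbit f x"
  then obtain k where "y = (f ^^ Suc k) x" unfolding orbit_def by auto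
  then show "y \<in> orbit f x" unfolding orbit_def by blast
qed

lemma orbit_subset:
  assumes "f ` S \<subseteq> S" "x \<in> S"
  shows "orbit f x \<subseteq> S"
proof -
  have "(f ^^ k) x \<in> S" for k
    by (induction k) (use assms in auto)
  then show ?thesis unfolding orbit_def by blast
qed

lemma mesic_0_if_sign_reversing:
  assumes "finite S" "bij_betw f S S" "\<And>y. y \<in> S \<Longrightarrow> stat (f y) = - stat y"
  shows "mesic f S stat 0"
  unfolding mesic_def
proof
  fix x assume "x \<in> S"
  let ?O = "orbit f x"
  have sub: "?O \<subseteq> S" using orbit_subset[OF _ \<open>x \<in> S\<close>] assms(2) by (simp add: bij_betw_def)
  have fin: "finite ?O" using assms(1) sub finite_subset by blast
  have inj: "inj_on f ?O" using assms(2) sub inj_on_subset by (auto simp: bij_betw_def)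
  have "(\<Sum>y\<in>?O. stat y) = (\<Sum>y\<in>f ` ?O. stat y)"
    using endo_inj_surj[OF fin image_orbit_subset inj] by simp
  also have "\<dots> = (\<Sum>y\<in>?O. stat (f y))" using inj by (simp add: sum.reindex)
  also have "\<dots> = - (\<Sum>y\<in>?O. stat y)" using sub assms(3) by (simp add: subset_iff sum_negf)
  finally have "(\<Sum>y\<in>?O. real_of_int (stat y)) = 0" by (simp flip: of_int_sum)
  then show "(\<Sum>y\<in>?O. real_of_int (stat y)) / real (card ?O) = 0" by simp
qed

lemma interval_closed_atLeastAtMost: "1 \<le> a \<Longrightarrow> b \<le> n \<Longrightarrow> interval_closed (chain n) {a..b}"
  unfolding interval_closed_def chain_def by auto

lemma interval_closed_empty: "interval_closed (chain n) {}"
  unfolding interval_closed_def by auto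

lemma IC_iff: "I \<in> IC n \<longleftrightarrow> I = {} \<or> (\<exists>a b. 1 \<le> a \<and> a \<le> b \<and> b \<le> n \<and> I = {a..b})"
proof
  assume "I \<in> IC n"
  then have ic: "interval_closed (chain n) I" by (simp add: IC_def)
  show "I = {} \<or> (\<exists>a b. 1 \<le> a \<and> a \<le> b \<and> b \<le> n \<and> I = {a..b})"
  proof (cases "I = {}")
    case False
    have sub: "I \<subseteq> {1..n}" using ic by (simp add: interval_closed_def chain_def)
    then have fin: "finite I" using finite_subset by blast
    have min: "Min I \<in> I" and max: "Max I \<in> I" using fin False by simp_all
    have "I \<subseteq> {Min I..Max I}" using fin by auto
    moreover have "{Min I..Max I} \<subseteq> I"
      using ic min max sub unfolding interval_closed_def chain_def by fastforce
    ultimately have "I = {Min I..Max I}" by blast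
    moreover have "1 \<le> Min I" "Max I \<le> n" "Min I \<le> Max I" using min max sub fin by auto
    ultimately show ?thesis by blast
  qed simp
next
  assume "I = {} \<or> (\<exists>a b. 1 \<le> a \<and> a \<le> b \<and> b \<le> n \<and> I = {a..b})"
  then show "I \<in> IC n"
    using interval_closed_atLeastAtMost interval_closed_empty by (auto simp: IC_def)
qed

lemma finite_IC: "finite (IC n)"
proof (rule finite_subset)
  show "IC n \<subseteq> Pow {1..n}" unfolding IC_def interval_closed_def chain_def by blast
qed simp

lemma toggle_in_IC: "toggle n x I \<in> IC n" if "I \<in> IC n"
  using that unfolding toggle_def Let_def IC_def by simp

lemma toggle_toggle: "toggle n x (toggle n x I) = I" if "I \<in> IC n"
proof (cases "interval_closed (chain n) ((I - {x}) \<union> ({x} - I))")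
  case True
  have "(((I - {x}) \<union> ({x} - I)) - {x}) \<union> ({x} - ((I - {x}) \<union> ({x} - I))) = I" by auto
  then show ?thesis using True that unfolding toggle_def Let_def IC_def by simp
qed (simp add: toggle_def Let_def)

lemma bij_betw_toggle: "bij_betw (toggle n x) (IC n) (IC n)"
  by (rule bij_betw_byWitness[where f' = "toggle n x"]) (auto simp: toggle_toggle toggle_in_IC)

lemma bij_betw_foldr_toggle: "bij_betw (foldr (\<lambda>x f. toggle n x \<circ> f) xs id) (IC n) (IC n)"
proof (induction xs)
  case (Cons x xs)
  then show ?case using bij_betw_trans[OF Cons.IH bij_betw_toggle] by (simp add: comp_def)
qed (simp add: bij_betw_id[unfolded id_def])

lemma bij_betw_rowmotion: "bij_betw (rowmotion n) (IC n) (IC n)"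
  unfolding rowmotion_def by (rule bij_betw_foldr_toggle)

lemma toggle_eqI: "interval_closed (chain n) J \<Longrightarrow> J = (I - {x}) \<union> ({x} - I) \<Longrightarrow> toggle n x I = J"
  unfolding toggle_def Let_def by simp

lemma toggle_eq_selfI:
  assumes "p \<in> J" "q \<in> J" "p \<le> z" "z \<le> q" "z \<in> chain n" "z \<notin> J"
    "J = (I - {x}) \<union> ({x} - I)"
  shows "toggle n x I = I"
proof -
  have "\<not> interval_closed (chain n) J" using assms(1-6) unfolding interval_closed_def by blast
  then show ?thesis using assms(7) by (simp add: toggle_def Let_def)
qed

lemma toggle_above_gap: "a \<le> b \<Longrightarrow> b + 1 < x \<Longrightarrow> x \<le> n \<Longrightarrow> toggle n x {a..b} = {a..b}"
  by (rule toggle_eq_selfI[of b _ x "b + 1"]) (auto simp: chain_def)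

lemma toggle_below_gap: "x + 1 < a \<Longrightarrow> a \<le> b \<Longrightarrow> 1 \<le> x \<Longrightarrow> b \<le> n \<Longrightarrow> toggle n x {a..b} = {a..b}"
  by (rule toggle_eq_selfI[of x _ a "x + 1"]) (auto simp: chain_def)

lemma toggle_interior: "a < x \<Longrightarrow> x < b \<Longrightarrow> b \<le> n \<Longrightarrow> toggle n x {a..b} = {a..b}"
  by (rule toggle_eq_selfI[of a _ b x]) (auto simp: chain_def)

lemma toggle_extend_right: "1 \<le> a \<Longrightarrow> a \<le> b \<Longrightarrow> b + 1 \<le> n \<Longrightarrow> toggle n (b + 1) {a..b} = {a..b + 1}"
  by (rule toggle_eqI, rule interval_closed_atLeastAtMost) auto

lemma toggle_extend_left: "1 \<le> x \<Longrightarrow> x + 1 \<le> b \<Longrightarrow> b \<le> n \<Longrightarrow> toggle n x {x + 1..b} = {x..b}"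
  by (rule toggle_eqI, rule interval_closed_atLeastAtMost) auto

lemma toggle_shrink_left: "1 \<le> a \<Longrightarrow> a < b \<Longrightarrow> b \<le> n \<Longrightarrow> toggle n a {a..b} = {a + 1..b}"
  by (rule toggle_eqI, rule interval_closed_atLeastAtMost) auto

lemma toggle_shrink_right: "1 \<le> a \<Longrightarrow> a < b \<Longrightarrow> b \<le> n \<Longrightarrow> toggle n b {a..b} = {a..b - 1}"
  by (rule toggle_eqI, rule interval_closed_atLeastAtMost) auto

lemma toggle_singleton: "toggle n a {a} = {}"
  by (rule toggle_eqI, rule interval_closed_empty) auto

lemma toggle_empty: "1 \<le> x \<Longrightarrow> x \<le> n \<Longrightarrow> toggle n x {} = {x}"
  using toggle_eqI[OF interval_closed_atLeastAtMost[of x x n]] by auto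

definition toggles_from :: "nat \<Rightarrow> nat \<Rightarrow> nat set \<Rightarrow> nat set" where
  "toggles_from n k = foldr (\<lambda>x f. toggle n x \<circ> f) [k..<n + 1] id"

lemma toggles_from_Suc: "k \<le> n \<Longrightarrow> toggles_from n k I = toggle n k (toggles_from n (Suc k) I)"
  unfolding toggles_from_def by (simp add: upt_conv_Cons del: upt_Suc)

lemma toggles_from_top [simp]: "toggles_from n (Suc n) I = I"
  unfolding toggles_from_def by simp

lemma rowmotion_eq_toggles_from: "rowmotion n = toggles_from n 1"
  unfolding rowmotion_def toggles_from_def by simp

lemma toggles_from_fixed:
  assumes "toggles_from n j I = T" "i \<le> j" "j \<le> n + 1"
    "\<And>x. i \<le> x \<Longrightarrow> x < j \<Longrightarrow> toggle n x T = T"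
  shows "toggles_from n i I = T"
  using assms(2)
proof (induction rule: inc_induct)
  case (step m)
  then show ?case using assms(3,4) by (simp add: toggles_from_Suc)
qed (fact assms(1))

lemma toggles_from_extend_left:
  assumes "toggles_from n j I = {j..c}" "1 \<le> i" "i \<le> j" "j \<le> c" "c \<le> n"
  shows "toggles_from n i I = {i..c}"
  using assms(3)
proof (induction rule: inc_induct)
  case (step m)
  then have "toggles_from n m I = toggle n m {m + 1..c}" using assms(4,5) by (simp add: toggles_from_Suc)
  also have "\<dots> = {m..c}" using step assms by (intro toggle_extend_left) auto
  finally show ?case .
qed (fact assms(1))

lemma toggles_from_shrink_right:
  assumes "1 \<le> a" "a < i" "i \<le> n + 1"
  shows "toggles_from n i {a..n} = {a..i - 1}"
  using assms(3)
proof (induction rule: inc_induct)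
  case (step m)
  then have "toggles_from n m {a..n} = toggle n m {a..m}" by (simp add: toggles_from_Suc)
  also have "\<dots> = {a..m - 1}" using step assms by (intro toggle_shrink_right) auto
  finally show ?case .
qed simp

lemma rowmotion_empty: "rowmotion n {} = {1..n}"
proof (cases "n = 0")
  case False
  then have "toggles_from n n {} = {n..n}" by (simp add: toggles_from_Suc toggle_empty)
  then have "toggles_from n 1 {} = {1..n}"
    by (rule toggles_from_extend_left) (use False in auto)
  then show ?thesis by (simp add: rowmotion_eq_toggles_from)
qed (simp add: rowmotion_eq_toggles_from)

lemma rowmotion_shift:
  assumes "1 \<le> a" "a \<le> b" "b < n"
  shows "rowmotion n {a..b} = {a + 1..b + 1}"
proof -
  have "toggles_from n (b + 2) {a..b} = {a..b}"
    by (rule toggles_from_fixed[of n "n + 1"]) (use assms in \<open>simp_all add: toggle_above_gap\<close>)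
  then have "toggles_from n (b + 1) {a..b} = {a..b + 1}"
    using assms toggle_extend_right[of a b n] by (simp add: toggles_from_Suc)
  then have "toggles_from n (a + 1) {a..b} = {a..b + 1}"
    by (rule toggles_from_fixed) (use assms in \<open>simp_all add: toggle_interior\<close>)
  then have "toggles_from n a {a..b} = {a + 1..b + 1}"
    using assms by (simp add: toggles_from_Suc toggle_shrink_left)
  then have "toggles_from n 1 {a..b} = {a + 1..b + 1}"
    by (rule toggles_from_fixed) (use assms in \<open>simp_all add: toggle_below_gap\<close>)
  then show ?thesis by (simp add: rowmotion_eq_toggles_from)
qed

lemma rowmotion_top:
  assumes "1 \<le> a" "a \<le> n"
  shows "rowmotion n {a..n} = {1..a - 1}"
proof -
  have "toggles_from n (a + 1) {a..n} = {a}"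
    using toggles_from_shrink_right[of a "a + 1" n] assms by simp
  then have empty: "toggles_from n a {a..n} = {}"
    using assms by (simp add: toggles_from_Suc toggle_singleton)
  show ?thesis
  proof (cases "a = 1")
    case False
    then have "toggles_from n (a - 1) {a..n} = {a - 1..a - 1}"
      using empty assms by (simp add: toggles_from_Suc toggle_empty)
    then have "toggles_from n 1 {a..n} = {1..a - 1}"
      by (rule toggles_from_extend_left) (use assms False in auto)
    then show ?thesis by (simp add: rowmotion_eq_toggles_from)
  qed (use empty in \<open>simp add: rowmotion_eq_toggles_from\<close>)
qed

lemma SC_elem_Suc: "1 \<le> x \<Longrightarrow> SC_elem (Suc x) = - SC_elem x"
  unfolding SC_elem_def by (cases x) auto

lemma SC_shift: "1 \<le> a \<Longrightarrow> SC {a + 1..b + 1} = - SC {a..b}"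
proof -
  assume "1 \<le> a"
  have "SC {a + 1..b + 1} = (\<Sum>i\<in>{a..b}. SC_elem (Suc i))"
    unfolding SC_def using sum.shift_bounds_cl_Suc_ivl[of SC_elem a b] by simp
  also have "\<dots> = (\<Sum>i\<in>{a..b}. - SC_elem i)"
    using \<open>1 \<le> a\<close> by (intro sum.cong) (auto simp: SC_elem_Suc)
  finally show ?thesis by (simp add: SC_def sum_negf)
qed

lemma SC_chain_even: "even n \<Longrightarrow> SC {1..n} = 0"
proof (induction n rule: nat_less_induct)
  case (1 n)
  show ?case
  proof (cases "n = 0")
    case False
    then obtain m where n: "n = Suc (Suc m)"
      using \<open>even n\<close> by (metis odd_one One_nat_def not0_implies_Suc)
    then have "even m" using \<open>even n\<close> by simp
    have "SC {1..n} = SC {1..m} + SC_elem (Suc m) + SC_elem (Suc (Suc m))"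
      unfolding SC_def n by (simp add: sum.cl_ivl_Suc)
    then show ?thesis using 1 \<open>even m\<close> n by (simp add: SC_elem_def)
  qed (simp add: SC_def)
qed

lemma SC_split: "1 \<le> a \<Longrightarrow> a \<le> n \<Longrightarrow> SC {1..n} = SC {1..a - 1} + SC {a..n}"
proof -
  assume "1 \<le> a" "a \<le> n"
  then have "{1..n} = {1..a - 1} \<union> {a..n}" by auto
  then show ?thesis unfolding SC_def by (simp add: sum.union_disjoint)
qed

lemma SC_rowmotion:
  assumes "even n" "I \<in> IC n"
  shows "SC (rowmotion n I) = - SC I"
proof -
  have zero: "SC {1..n} = 0" using assms(1) by (rule SC_chain_even)
  consider "I = {}" | a b where "1 \<le> a" "a \<le> b" "b < n" "I = {a..b}"
    | a where "1 \<le> a" "a \<le> n" "I = {a..n}"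
  proof -
    have "I = {} \<or> (\<exists>a b. 1 \<le> a \<and> a \<le> b \<and> b \<le> n \<and> I = {a..b})"
      using assms(2) by (simp only: IC_iff)
    then show thesis using that by (auto simp: order.order_iff_strict)
  qed
  then show ?thesis
  proof cases
    case 1
    then show ?thesis using zero by (simp add: rowmotion_empty SC_def)
  next
    case (2 a b)
    then show ?thesis using SC_shift[of a b] by (simp add: rowmotion_shift)
  next
    case (3 a)
    then show ?thesis using zero SC_split[of a n] by (simp add: rowmotion_top)
  qed
qed

theorem proposition3p16:
  fixes n :: nat
  assumes "even n"
  shows "mesic (rowmotion n) (IC n) SC 0"
  using finite_IC bij_betw_rowmotion SC_rowmotion[OF assms]
  by (rule mesic_0_if_sign_reversing)

end
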